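(* Let $T=(T_1,T_2)$ be a toral $2$-isometry on a complex Hilbert space $\mathcal H$. Then: (i) for all integers $k,l\ge0$, $$T_1^{*k}T_2^{*l}T_2^lT_1^k=T_1^{*k}T_1^k+T_2^{*l}T_2^l-I=kT_1^*T_1+lT_2^*T_2-(k+l-1)I;$$ (ii) if $f_0\in\ker T^*=\ker T_1^*\cap\ker T_2^*$ satisfies $\langle T_1^mf_0,T_1^pT_2^qf_0\rangle=0$ for all $q\ge1$, $m,p\ge0$, and $\langle T_2^nf_0,T_1^pT_2^qf_0\rangle=0$ for all $p\ge1$, $n,q\ge0$, then for all $m,n,p,q\ge0$, $$\langle T_1^mT_2^nf_0,T_1^pT_2^qf_0\rangle=\begin{cases}0 & m\ne p,\ n\ne q,\\ \langle T_2^nf_0,T_2^qf_0\rangle & m=p,\ n\ne q,\\ \langle T_1^mf_0,T_1^pf_0\rangle & m\ne p,\ n=q,\\ \|T_1^mf_0\|^2+\|T_2^nf_0\|^2-\|f_0\|^2 & m=p,\ n=q.\end{cases}$$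
   Context: A commuting pair $T=(T_1,T_2)$ of bounded operators on $\mathcal H$ is a toral $2$-isometry if $I-T_i^*T_i-T_j^*T_j+T_j^*T_i^*T_iT_j=0$ for all $i,j\in\{1,2\}$. *)

theory Defs
  imports Complex_Main
begin

class complex_vector = ab_group_add +
  fixes scaleC :: "complex \<Rightarrow> 'a \<Rightarrow> 'a" (infixr "*\<^sub>C" 75)
  assumes scaleC_add_right: "a *\<^sub>C (x + y) = a *\<^sub>C x + a *\<^sub>C y"
    and scaleC_add_left: "(a + b) *\<^sub>C x = a *\<^sub>C x + b *\<^sub>C x"
    and scaleC_scaleC: "a *\<^sub>C (b *\<^sub>C x) = (a * b) *\<^sub>C x"
    and scaleC_one: "1 *\<^sub>C x = x"

class complex_inner = complex_vector +
  fixes cinner :: "'a \<Rightarrow> 'a \<Rightarrow> complex"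
  assumes cinner_add_left: "cinner (x + y) z = cinner x z + cinner y z"
    and cinner_scaleC_left: "cinner (a *\<^sub>C x) y = a * cinner x y"
    and cinner_commute: "cinner y x = cnj (cinner x y)"
    and cinner_ge_zero: "0 \<le> Re (cinner x x)"
    and cinner_eq_zero_iff: "cinner x x = 0 \<longleftrightarrow> x = 0"

definition cnorm :: "'a::complex_inner \<Rightarrow> real" where
  "cnorm x = sqrt (Re (cinner x x))"

class complex_hilbert = complex_inner +
  assumes cauchy_convergent:
    "(\<forall>e>0. \<exists>N. \<forall>m\<ge>N. \<forall>n\<ge>N. sqrt (Re (cinner (X m - X n) (X m - X n))) < e)
      \<Longrightarrow> \<exists>L. (\<lambda>n. sqrt (Re (cinner (X n - L) (X n - L)))) \<longlonglongrightarrow> 0"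

definition bounded_op :: "('a::complex_inner \<Rightarrow> 'a) \<Rightarrow> bool" where
  "bounded_op T \<longleftrightarrow> (\<forall>x y. T (x + y) = T x + T y) \<and> (\<forall>a x. T (a *\<^sub>C x) = a *\<^sub>C T x)
     \<and> (\<exists>K. \<forall>x. cnorm (T x) \<le> K * cnorm x)"

definition is_adjoint :: "('a::complex_inner \<Rightarrow> 'a) \<Rightarrow> ('a \<Rightarrow> 'a) \<Rightarrow> bool" where
  "is_adjoint T S \<longleftrightarrow> (\<forall>x y. cinner (T x) y = cinner x (S y))"

definition toral_2isometry :: "(nat \<Rightarrow> 'a::complex_inner \<Rightarrow> 'a) \<Rightarrow> (nat \<Rightarrow> 'a \<Rightarrow> 'a) \<Rightarrow> bool" where
  "toral_2isometry T S \<longleftrightarrow> T 1 \<circ> T 2 = T 2 \<circ> T 1 \<and>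
     (\<forall>i\<in>{1,2}. \<forall>j\<in>{1,2}. \<forall>x.
        x - S i (T i x) - S j (T j x) + S j (S i (T i (T j x))) = 0)"

end

theory Submission
  imports Defs
begin

(*
  In inner-product form the toral relation for the pair (T_i, T_j) reads
  <T_i T_j x, T_i T_j y> = <T_i x, T_i y> + <T_j x, T_j y> - <x, y>.
  For commuting operators it passes from (A, B) to (A^k, B^l) by induction, and for A = B it
  makes <A^n x, A^n y> an arithmetic progression in n; this gives (i).
  For (ii), the relation for (T_1^a, T_2^b) with a = min m p, b = min n q expresses
  <T_1^m T_2^n f0, T_1^p T_2^q f0> through three inner products in each of which, for each
  generator, the exponent on one side is zero; the orthogonality hypotheses then kill all but
  the claimed terms.
*)

lemma cinner_zero_left [simp]: "cinner 0 y = 0"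
proof -
  have "cinner 0 y = cinner (0 + 0) y" by simp
  also have "\<dots> = cinner 0 y + cinner 0 y" by (rule cinner_add_left)
  finally show ?thesis by simp
qed

lemma cinner_diff_left: "cinner (x - y) z = cinner x z - cinner y z"
  by (metis add_diff_cancel_right' cinner_add_left diff_add_cancel)

lemma cinner_ext:
  assumes "\<And>y. cinner a y = cinner b y"
  shows "a = b"
proof -
  have "cinner (a - b) (a - b) = 0"
    using assms[of "a - b"] by (simp add: cinner_diff_left)
  then show ?thesis by (simp add: cinner_eq_zero_iff)
qed

lemma cinner_self_eq_cnorm_square: "cinner x x = complex_of_real (cnorm x ^ 2)"
proof -
  have "Im (cinner x x) = 0"
    using arg_cong[OF cinner_commute[of x x], of Im] by simp
  moreover have "cnorm x ^ 2 = Re (cinner x x)"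
    unfolding cnorm_def using cinner_ge_zero[of x] by simp
  ultimately show ?thesis by (simp add: complex_eq_iff)
qed

lemma is_adjoint_left: "is_adjoint T S \<Longrightarrow> cinner (S x) y = cinner x (T y)"
  unfolding is_adjoint_def by (metis cinner_commute)

lemma is_adjoint_funpow:
  assumes "is_adjoint T S"
  shows "is_adjoint (T ^^ k) (S ^^ k)"
proof (induction k)
  case 0
  show ?case by (simp add: is_adjoint_def)
next
  case (Suc k)
  then show ?case
    using assms by (simp add: is_adjoint_def funpow_swap1)
qed

lemma funpow_commute_funpow:
  assumes "\<And>x. f (g x) = g (f x)"
  shows "(f ^^ m) ((g ^^ n) x) = (g ^^ n) ((f ^^ m) x)"
proof -
  have "f ((g ^^ n) x) = (g ^^ n) (f x)" for x
    by (induction n) (simp_all add: assms)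
  then show ?thesis by (induction m) simp_all
qed

definition two_isometric_pair :: "('a::complex_inner \<Rightarrow> 'a) \<Rightarrow> ('a \<Rightarrow> 'a) \<Rightarrow> bool" where
  "two_isometric_pair A B \<longleftrightarrow>
     (\<forall>x y. cinner (A (B x)) (A (B y)) = cinner (A x) (A y) + cinner (B x) (B y) - cinner x y)"

lemma two_isometric_pairI:
  assumes adj: "is_adjoint A A'" "is_adjoint B B'"
    and rel: "\<And>x. x - A' (A x) - B' (B x) + B' (A' (A (B x))) = 0"
  shows "two_isometric_pair A B"
  unfolding two_isometric_pair_def
proof (intro allI)
  fix x y
  have "cinner (x - A' (A x) - B' (B x) + B' (A' (A (B x)))) y = 0"
    by (simp add: rel)
  then have "cinner x y - cinner (A x) (A y) - cinner (B x) (B y) + cinner (A (B x)) (A (B y)) = 0"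
    by (simp add: cinner_add_left cinner_diff_left is_adjoint_left[OF adj(1)] is_adjoint_left[OF adj(2)])
  then show "cinner (A (B x)) (A (B y)) = cinner (A x) (A y) + cinner (B x) (B y) - cinner x y"
    by (simp add: algebra_simps)
qed

lemma two_isometric_pair_commute:
  assumes "\<And>x. A (B x) = B (A x)" and "two_isometric_pair A B"
  shows "two_isometric_pair B A"
  using assms by (simp add: two_isometric_pair_def add.commute)

lemma two_isometric_pair_funpow_left:
  assumes comm: "\<And>x. A (B x) = B (A x)" and pair: "two_isometric_pair A B"
  shows "two_isometric_pair (A ^^ k) B"
proof (induction k)
  case 0
  show ?case by (simp add: two_isometric_pair_def)
next
  case (Suc k)
  have swap: "(A ^^ k) (B z) = B ((A ^^ k) z)" for z
    using funpow_commute_funpow[of A B k 1] comm by simp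
  show ?case
    unfolding two_isometric_pair_def
  proof (intro allI)
    fix x y
    have "cinner ((A ^^ Suc k) (B x)) ((A ^^ Suc k) (B y))
        = cinner (A (B ((A ^^ k) x))) (A (B ((A ^^ k) y)))"
      by (simp add: swap)
    also have "\<dots> = cinner ((A ^^ Suc k) x) ((A ^^ Suc k) y)
        + cinner ((A ^^ k) (B x)) ((A ^^ k) (B y)) - cinner ((A ^^ k) x) ((A ^^ k) y)"
      using pair by (simp add: two_isometric_pair_def swap)
    finally show "cinner ((A ^^ Suc k) (B x)) ((A ^^ Suc k) (B y))
        = cinner ((A ^^ Suc k) x) ((A ^^ Suc k) y) + cinner (B x) (B y) - cinner x y"
      using Suc.IH by (simp add: two_isometric_pair_def)
  qed
qed

lemma two_isometric_pair_funpow: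
  assumes comm: "\<And>x. A (B x) = B (A x)" and pair: "two_isometric_pair A B"
  shows "two_isometric_pair (A ^^ k) (B ^^ l)"
proof -
  have comm_k: "B ((A ^^ k) x) = (A ^^ k) (B x)" for x
    using funpow_commute_funpow[of B A 1 k] comm by simp
  have comm_kl: "(A ^^ k) ((B ^^ l) x) = (B ^^ l) ((A ^^ k) x)" for x
    by (rule funpow_commute_funpow) (rule comm)
  have "two_isometric_pair B (A ^^ k)"
    using two_isometric_pair_commute [of "A ^^ k" B] comm_k two_isometric_pair_funpow_left [OF comm pair]
    by simp
  then have "two_isometric_pair (B ^^ l) (A ^^ k)"
    using two_isometric_pair_funpow_left [of B "A ^^ k" l] comm_k by simp
  then show ?thesis
    using two_isometric_pair_commute [of "B ^^ l" "A ^^ k"] comm_kl by simp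
qed

lemma cinner_funpow_two_isometry:
  assumes "two_isometric_pair A A"
  shows "cinner ((A ^^ n) x) ((A ^^ n) y)
    = of_nat n * cinner (A x) (A y) - (of_nat n - 1) * cinner x y"
proof (induction n arbitrary: x y)
  case 0
  show ?case by simp
next
  case (Suc n)
  have "cinner ((A ^^ Suc n) x) ((A ^^ Suc n) y) = cinner ((A ^^ n) (A x)) ((A ^^ n) (A y))"
    by (simp add: funpow_swap1)
  also have "\<dots> = of_nat n * cinner (A (A x)) (A (A y)) - (of_nat n - 1) * cinner (A x) (A y)"
    by (rule Suc.IH)
  also have "cinner (A (A x)) (A (A y)) = 2 * cinner (A x) (A y) - cinner x y"
    using assms by (simp add: two_isometric_pair_def)
  finally show ?case by (simp add: algebra_simps)
qed

lemma adjoint_funpow_product_eq: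
  assumes adj: "is_adjoint A A'" "is_adjoint B B'"
    and comm: "\<And>x. A (B x) = B (A x)" and pair: "two_isometric_pair A B"
  shows "(A' ^^ k) ((B' ^^ l) ((B ^^ l) ((A ^^ k) x)))
    = (A' ^^ k) ((A ^^ k) x) + (B' ^^ l) ((B ^^ l) x) - x"
proof (rule cinner_ext)
  fix y
  note adj_pow = is_adjoint_left[OF is_adjoint_funpow[OF adj(1)]]
    is_adjoint_left[OF is_adjoint_funpow[OF adj(2)]]
  have "cinner ((A' ^^ k) ((B' ^^ l) ((B ^^ l) ((A ^^ k) x)))) y
      = cinner ((A ^^ k) ((B ^^ l) x)) ((A ^^ k) ((B ^^ l) y))"
    using funpow_commute_funpow[of A B k l] comm by (simp add: adj_pow)
  also have "\<dots> = cinner ((A ^^ k) x) ((A ^^ k) y) + cinner ((B ^^ l) x) ((B ^^ l) y) - cinner x y"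
    using two_isometric_pair_funpow[OF comm pair] by (simp add: two_isometric_pair_def)
  also have "\<dots> = cinner ((A' ^^ k) ((A ^^ k) x) + (B' ^^ l) ((B ^^ l) x) - x) y"
    by (simp add: cinner_add_left cinner_diff_left adj_pow)
  finally show "cinner ((A' ^^ k) ((B' ^^ l) ((B ^^ l) ((A ^^ k) x)))) y
      = cinner ((A' ^^ k) ((A ^^ k) x) + (B' ^^ l) ((B ^^ l) x) - x) y" .
qed

lemma adjoint_funpow_product_eq_linear:
  assumes adj: "is_adjoint A A'" "is_adjoint B B'" and comm: "\<And>x. A (B x) = B (A x)"
    and pairs: "two_isometric_pair A B" "two_isometric_pair A A" "two_isometric_pair B B"
  shows "(A' ^^ k) ((B' ^^ l) ((B ^^ l) ((A ^^ k) x)))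
    = of_nat k *\<^sub>C A' (A x) + of_nat l *\<^sub>C B' (B x) - (of_nat k + of_nat l - 1) *\<^sub>C x"
proof (rule cinner_ext)
  fix y
  have "cinner ((A' ^^ k) ((B' ^^ l) ((B ^^ l) ((A ^^ k) x)))) y
      = cinner ((A ^^ k) x) ((A ^^ k) y) + cinner ((B ^^ l) x) ((B ^^ l) y) - cinner x y"
    by (simp add: adjoint_funpow_product_eq[OF adj comm pairs(1)] cinner_add_left cinner_diff_left
        is_adjoint_left[OF is_adjoint_funpow[OF adj(1)]] is_adjoint_left[OF is_adjoint_funpow[OF adj(2)]])
  also have "\<dots> = cinner (of_nat k *\<^sub>C A' (A x) + of_nat l *\<^sub>C B' (B x)
      - (of_nat k + of_nat l - 1) *\<^sub>C x) y"
    by (simp add: cinner_funpow_two_isometry[OF pairs(2)] cinner_funpow_two_isometry[OF pairs(3)]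
        cinner_add_left cinner_diff_left cinner_scaleC_left is_adjoint_left[OF adj(1)]
        is_adjoint_left[OF adj(2)] algebra_simps)
  finally show "cinner ((A' ^^ k) ((B' ^^ l) ((B ^^ l) ((A ^^ k) x)))) y
      = cinner (of_nat k *\<^sub>C A' (A x) + of_nat l *\<^sub>C B' (B x)
        - (of_nat k + of_nat l - 1) *\<^sub>C x) y" .
qed

lemma cinner_orbit_reduce:
  assumes comm: "\<And>x. A (B x) = B (A x)" and pair: "two_isometric_pair A B"
    and le: "a \<le> m" "a \<le> p" "b \<le> n" "b \<le> q"
  shows "cinner ((A ^^ m) ((B ^^ n) f)) ((A ^^ p) ((B ^^ q) f))
    = cinner ((A ^^ m) ((B ^^ (n - b)) f)) ((A ^^ p) ((B ^^ (q - b)) f))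
    + cinner ((A ^^ (m - a)) ((B ^^ n) f)) ((A ^^ (p - a)) ((B ^^ q) f))
    - cinner ((A ^^ (m - a)) ((B ^^ (n - b)) f)) ((A ^^ (p - a)) ((B ^^ (q - b)) f))"
proof -
  have split: "(F ^^ i) ((F ^^ (j - i)) w) = (F ^^ j) w" if "i \<le> j" for F :: "'a \<Rightarrow> 'a" and i j w
    using that by (metis funpow_add comp_apply le_add_diff_inverse)
  have swap: "(A ^^ i) ((B ^^ j) w) = (B ^^ j) ((A ^^ i) w)" for i j w
    by (rule funpow_commute_funpow) (rule comm)
  have orbit: "(A ^^ i') ((B ^^ j') f) = (A ^^ i) ((B ^^ j) ((A ^^ (i' - i)) ((B ^^ (j' - j)) f)))"
    and left: "(A ^^ i) ((A ^^ (i' - i)) ((B ^^ (j' - j)) f)) = (A ^^ i') ((B ^^ (j' - j)) f)"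
    and right: "(B ^^ j) ((A ^^ (i' - i)) ((B ^^ (j' - j)) f)) = (A ^^ (i' - i)) ((B ^^ j') f)"
    if "i \<le> i'" "j \<le> j'" for i i' j j'
    using that by (simp_all add: swap split)
  let ?u = "(A ^^ (m - a)) ((B ^^ (n - b)) f)" and ?v = "(A ^^ (p - a)) ((B ^^ (q - b)) f)"
  have "cinner ((A ^^ m) ((B ^^ n) f)) ((A ^^ p) ((B ^^ q) f))
      = cinner ((A ^^ a) ((B ^^ b) ?u)) ((A ^^ a) ((B ^^ b) ?v))"
    by (simp only: orbit[OF le(1,3)] orbit[OF le(2,4)])
  also have "\<dots> = cinner ((A ^^ a) ?u) ((A ^^ a) ?v) + cinner ((B ^^ b) ?u) ((B ^^ b) ?v) - cinner ?u ?v"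
    using two_isometric_pair_funpow[OF comm pair] unfolding two_isometric_pair_def by blast
  also have "\<dots> = cinner ((A ^^ m) ((B ^^ (n - b)) f)) ((A ^^ p) ((B ^^ (q - b)) f))
    + cinner ((A ^^ (m - a)) ((B ^^ n) f)) ((A ^^ (p - a)) ((B ^^ q) f)) - cinner ?u ?v"
    by (simp only: left[OF le(1,3)] left[OF le(2,4)] right[OF le(1,3)] right[OF le(2,4)])
  finally show ?thesis .
qed

lemma gram_cases_of_reduction:
  fixes c :: "nat \<Rightarrow> nat \<Rightarrow> nat \<Rightarrow> nat \<Rightarrow> complex"
  assumes hermitian: "\<And>m n p q. c p q m n = cnj (c m n p q)"
    and orth1: "\<And>m p q. q \<ge> 1 \<Longrightarrow> c m 0 p q = 0"
    and orth2: "\<And>n p q. p \<ge> 1 \<Longrightarrow> c 0 n p q = 0"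
    and reduce: "\<And>a b m n p q. a \<le> m \<Longrightarrow> a \<le> p \<Longrightarrow> b \<le> n \<Longrightarrow> b \<le> q \<Longrightarrow>
      c m n p q = c m (n - b) p (q - b) + c (m - a) n (p - a) q - c (m - a) (n - b) (p - a) (q - b)"
  shows "c m n p q = (if m \<noteq> p \<and> n \<noteq> q then 0
    else if m = p \<and> n \<noteq> q then c 0 n 0 q
    else if m \<noteq> p \<and> n = q then c m 0 p 0
    else c m 0 m 0 + c 0 n 0 n - c 0 0 0 0)"
proof -
  have orth1': "c p q m 0 = 0" if "q \<ge> 1" for m p q
    using hermitian[of m 0 p q] orth1[OF that] by simp
  have orth2': "c p q 0 n = 0" if "p \<ge> 1" for n p q
    using hermitian[of 0 n p q] orth2[OF that] by simp
  have "m < p \<or> m = p \<or> m > p" and "n < q \<or> n = q \<or> n > q"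
    by linarith+
  then show ?thesis
    using reduce[of "min m p" m p "min n q" n q]
    by (elim disjE) (simp_all add: orth1 orth2 orth1' orth2')
qed

lemma cinner_orbit_cases:
  assumes comm: "\<And>x. A (B x) = B (A x)" and pair: "two_isometric_pair A B"
    and orth1: "\<And>q m p. q \<ge> 1 \<Longrightarrow> cinner ((A ^^ m) f) ((A ^^ p) ((B ^^ q) f)) = 0"
    and orth2: "\<And>p n q. p \<ge> 1 \<Longrightarrow> cinner ((B ^^ n) f) ((A ^^ p) ((B ^^ q) f)) = 0"
  shows "cinner ((A ^^ m) ((B ^^ n) f)) ((A ^^ p) ((B ^^ q) f))
    = (if m \<noteq> p \<and> n \<noteq> q then 0
       else if m = p \<and> n \<noteq> q then cinner ((B ^^ n) f) ((B ^^ q) f)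
       else if m \<noteq> p \<and> n = q then cinner ((A ^^ m) f) ((A ^^ p) f)
       else complex_of_real (cnorm ((A ^^ m) f) ^ 2 + cnorm ((B ^^ n) f) ^ 2 - cnorm f ^ 2))"
proof -
  define c where "c m n p q = cinner ((A ^^ m) ((B ^^ n) f)) ((A ^^ p) ((B ^^ q) f))" for m n p q
  have "c m n p q = (if m \<noteq> p \<and> n \<noteq> q then 0
    else if m = p \<and> n \<noteq> q then c 0 n 0 q
    else if m \<noteq> p \<and> n = q then c m 0 p 0
    else c m 0 m 0 + c 0 n 0 n - c 0 0 0 0)"
  proof (rule gram_cases_of_reduction)
    show "c p q m n = cnj (c m n p q)" for m n p q
      unfolding c_def by (rule cinner_commute)
    show "c m 0 p q = 0" if "q \<ge> 1" for m p q
      unfolding c_def using orth1[OF that] by simp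
    show "c 0 n p q = 0" if "p \<ge> 1" for n p q
      unfolding c_def using orth2[OF that] by simp
    show "c m n p q = c m (n - b) p (q - b) + c (m - a) n (p - a) q - c (m - a) (n - b) (p - a) (q - b)"
      if "a \<le> m" "a \<le> p" "b \<le> n" "b \<le> q" for a b m n p q
      unfolding c_def by (rule cinner_orbit_reduce[OF comm pair that])
  qed
  then show ?thesis
    by (simp add: c_def cinner_self_eq_cnorm_square)
qed

theorem lemma6p1:
  fixes T S :: "nat \<Rightarrow> 'a::complex_hilbert \<Rightarrow> 'a"
  assumes bounded: "bounded_op (T 1)" "bounded_op (T 2)"
    and adj: "is_adjoint (T 1) (S 1)" "is_adjoint (T 2) (S 2)"
    and tor: "toral_2isometry T S"
  shows
    "(\<forall>k l x.
        (S 1 ^^ k) ((S 2 ^^ l) ((T 2 ^^ l) ((T 1 ^^ k) x)))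
          = (S 1 ^^ k) ((T 1 ^^ k) x) + (S 2 ^^ l) ((T 2 ^^ l) x) - x
      \<and> (S 1 ^^ k) ((S 2 ^^ l) ((T 2 ^^ l) ((T 1 ^^ k) x)))
          = of_nat k *\<^sub>C S 1 (T 1 x) + of_nat l *\<^sub>C S 2 (T 2 x)
            - (of_nat k + of_nat l - 1) *\<^sub>C x)
     \<and>
     (\<forall>f0. S 1 f0 = 0 \<and> S 2 f0 = 0
        \<and> (\<forall>q m p. q \<ge> 1 \<longrightarrow>
              cinner ((T 1 ^^ m) f0) ((T 1 ^^ p) ((T 2 ^^ q) f0)) = 0)
        \<and> (\<forall>p n q. p \<ge> 1 \<longrightarrow>
              cinner ((T 2 ^^ n) f0) ((T 1 ^^ p) ((T 2 ^^ q) f0)) = 0)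
      \<longrightarrow> (\<forall>m n p q.
            cinner ((T 1 ^^ m) ((T 2 ^^ n) f0)) ((T 1 ^^ p) ((T 2 ^^ q) f0))
            = (if m \<noteq> p \<and> n \<noteq> q then 0
               else if m = p \<and> n \<noteq> q then cinner ((T 2 ^^ n) f0) ((T 2 ^^ q) f0)
               else if m \<noteq> p \<and> n = q then cinner ((T 1 ^^ m) f0) ((T 1 ^^ p) f0)
               else complex_of_real (cnorm ((T 1 ^^ m) f0) ^ 2 + cnorm ((T 2 ^^ n) f0) ^ 2
                                     - cnorm f0 ^ 2))))"
proof -
  have comm: "T 1 (T 2 x) = T 2 (T 1 x)" for x
    using tor by (simp add: toral_2isometry_def fun_eq_iff)
  have pair: "two_isometric_pair (T i) (T j)" if "i \<in> {1, 2}" "j \<in> {1, 2}" for i j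
    using tor that adj unfolding toral_2isometry_def
    by (intro two_isometric_pairI[of "T i" "S i" "T j" "S j"]) auto
  note pairs = pair[of 1 2] pair[of 1 1] pair[of 2 2]
  show ?thesis
    using adjoint_funpow_product_eq[OF adj comm pairs(1)]
      adjoint_funpow_product_eq_linear[OF adj comm pairs]
      cinner_orbit_cases[OF comm pairs(1)]
    by simp
qed

end
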